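(* Assume the setting in the context, with a decomposition of $\mathcal X$ over $A$, $g\in\mathcal G_s$ and an integer $T>0$, and assume that $$\operatorname*{argmin}_{u\in\mathcal U} J^*_{t+1}(Ax+Bu)\cap\Big[\bigoplus_{i\in\mathcal I}\mathcal E_i\Big]\neq\emptyset\quad\text{for all }x\in\mathcal X,\ t\in\{0,\dots,T-1\}.$$ Then $J^*_t\in\mathcal G_s$ for every $t\in\{0,1,\dots,T\}$.
   Context: Let $\mathcal F$ be a field and $\mathcal X,\mathcal U$ finite-dimensional vector spaces over $\mathcal F$. Let $A:\mathcal X\to\mathcal X$ and $B:\mathcal U\to\mathcal X$ be linear maps with $B$ injective, and let $g:\mathcal X\to\mathbb R_{\ge0}$ satisfy $g(x)=0\iff x=0$. Standing assumption: all minima appearing below are attained. For the finite-horizon problem $(A,B,g,T)$ associated with the system $x_{t+1}=Ax_t+Bu_t$, the cost-to-go functions are defined by $J^*_T=g$ and $J^*_t(x)=g(x)+\min_{u\in\mathcal U}J^*_{t+1}(Ax+Bu)$ for $t=0,\dots,T-1$. A decomposition of $\mathcal X$ over $A$ is a direct sum $\mathcal X=\mathcal X_1\oplus\cdots\oplus\mathcal X_r$ with $r>1$ and $A\mathcal X_i\subseteq\mathcal X_i$ for all $i\in\mathcal I=\{1,\dots,r\}$; $\rho_i:\mathcal X\to\mathcal X_i$ is the projection along the other summands. $\mathcal G_s$ is the set of $h:\mathcal X\to\mathbb R_{\ge0}$ with $h(x)=\sum_i h(\rho_i(x))$ for all $x$. $\mathcal E_i=\{u\in\mathcal U:Bu\in\mathcal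 X_i\}$. *)

theory Defs
  imports Complex_Main
begin

definition is_components :: "nat \<Rightarrow> (nat \<Rightarrow> 'x::ab_group_add set) \<Rightarrow> 'x \<Rightarrow> (nat \<Rightarrow> 'x) \<Rightarrow> bool" where
  "is_components r Xs x c \<longleftrightarrow>
     (\<forall>i\<in>{1..r}. c i \<in> Xs i) \<and> (\<forall>i. i \<notin> {1..r} \<longrightarrow> c i = 0) \<and> x = (\<Sum>i\<in>{1..r}. c i)"

definition is_decomposition ::
  "('f::field \<Rightarrow> 'x::ab_group_add \<Rightarrow> 'x) \<Rightarrow> ('x \<Rightarrow> 'x) \<Rightarrow> nat \<Rightarrow> (nat \<Rightarrow> 'x set) \<Rightarrow> bool" where
  "is_decomposition sX A r Xs \<longleftrightarrow>
     r > 1 \<and>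
     (\<forall>i\<in>{1..r}. module.subspace sX (Xs i)) \<and>
     (\<forall>x. \<exists>!c. is_components r Xs x c) \<and>
     (\<forall>i\<in>{1..r}. A ` Xs i \<subseteq> Xs i)"

definition proj :: "nat \<Rightarrow> (nat \<Rightarrow> 'x::ab_group_add set) \<Rightarrow> nat \<Rightarrow> 'x \<Rightarrow> 'x" where
  "proj r Xs i x = (THE c. is_components r Xs x c) i"

definition in_Gs :: "nat \<Rightarrow> (nat \<Rightarrow> 'x::ab_group_add set) \<Rightarrow> ('x \<Rightarrow> real) \<Rightarrow> bool" where
  "in_Gs r Xs h \<longleftrightarrow> (\<forall>x. h x \<ge> 0) \<and> (\<forall>x. h x = (\<Sum>i\<in>{1..r}. h (proj r Xs i x)))"

definition Eset :: "('u \<Rightarrow> 'x) \<Rightarrow> (nat \<Rightarrow> 'x set) \<Rightarrow> nat \<Rightarrow> 'u set" where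
  "Eset B Xs i = {u. B u \<in> Xs i}"

text \<open>The sum E_1 + ... + E_r (direct, since B is injective).\<close>
definition Esum :: "nat \<Rightarrow> ('u::ab_group_add \<Rightarrow> 'x) \<Rightarrow> (nat \<Rightarrow> 'x set) \<Rightarrow> 'u set" where
  "Esum r B Xs = {(\<Sum>i\<in>{1..r}. e i) | e. \<forall>i\<in>{1..r}. e i \<in> Eset B Xs i}"

text \<open>The min is written as an infimum;
  it is the minimum whenever the minimum is attained (standing assumption).\<close>
fun ctg :: "('x \<Rightarrow> real) \<Rightarrow> ('x::ab_group_add \<Rightarrow> 'x) \<Rightarrow> ('u \<Rightarrow> 'x) \<Rightarrow> nat \<Rightarrow> 'x \<Rightarrow> real" where
  "ctg g A B 0 x = g x"
| "ctg g A B (Suc k) x = g x + (INF u. ctg g A B k (A x + B u))"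

text \<open>J*_t for horizon T (meaningful for t \<le> T).\<close>
definition Jstar :: "('x \<Rightarrow> real) \<Rightarrow> ('x::ab_group_add \<Rightarrow> 'x) \<Rightarrow> ('u \<Rightarrow> 'x) \<Rightarrow> nat \<Rightarrow> nat \<Rightarrow> 'x \<Rightarrow> real" where
  "Jstar g A B T t = ctg g A B (T - t)"

definition argmin_set :: "('x \<Rightarrow> real) \<Rightarrow> ('x::ab_group_add \<Rightarrow> 'x) \<Rightarrow> ('u \<Rightarrow> 'x) \<Rightarrow> nat \<Rightarrow> nat \<Rightarrow> 'x \<Rightarrow> 'u set" where
  "argmin_set g A B T t x =
     {u. \<forall>v. Jstar g A B T (Suc t) (A x + B u) \<le> Jstar g A B T (Suc t) (A x + B v)}"

end

theory Submission
  imports Defs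
begin

text \<open>If J is separable, so is x \<mapsto> min_u J(Ax + Bu): with the minimiser
  u = e_1 + ... + e_r (B e_i \<in> X_i) the cost at x splits into the costs at the
  components \<rho>_i x with controls e_i, which gives one inequality; conversely the same
  splitting shows that the optimal cost at a point y \<in> X_i is already reached by a
  single control in E_i, and summing these controls gives the other.  Since the
  cost-to-go functions arise by adding g to such minima, separability propagates
  backwards from J*_T = g.\<close>

definition bellman_min :: "('x \<Rightarrow> real) \<Rightarrow> ('x \<Rightarrow> 'x) \<Rightarrow> ('u \<Rightarrow> 'x::ab_group_add) \<Rightarrow> 'x \<Rightarrow> real" where
  "bellman_min J A B x = (INF u. J (A x + B u))"

lemma ctg_Suc_bellman_min: "ctg g A B (Suc k) = (\<lambda>x. g x + bellman_min (ctg g A B k) A B x)"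
  by (simp add: bellman_min_def fun_eq_iff)

lemma bellman_min_le:
  assumes "\<forall>y. 0 \<le> J y"
  shows "bellman_min J A B x \<le> J (A x + B u)"
  unfolding bellman_min_def using assms by (intro cINF_lower bdd_belowI[of _ 0]) auto

lemma bellman_min_nonneg:
  assumes "\<forall>y. 0 \<le> J y"
  shows "0 \<le> bellman_min J A B x"
  unfolding bellman_min_def using assms by (intro cINF_greatest) auto

lemma bellman_min_eq_minimum:
  assumes "\<forall>v. J (A x + B u) \<le> J (A x + B v)"
  shows "bellman_min J A B x = J (A x + B u)"
  unfolding bellman_min_def using assms by (intro cInf_eq_minimum) auto

lemma in_Gs_nonneg: "in_Gs r Xs h \<Longrightarrow> 0 \<le> h x"
  unfolding in_Gs_def by blast

lemma linear_imp_additive: "Vector_Spaces.linear s1 s2 f \<Longrightarrow> additive f"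
  by (intro additive.intro) (metis module_hom.add module_hom_iff_linear)

locale direct_sum_decomposition =
  fixes r :: nat and Xs :: "nat \<Rightarrow> 'x::ab_group_add set"
  assumes unique_components: "\<exists>!c. is_components r Xs x c"
    and zero_mem: "i \<in> {1..r} \<Longrightarrow> 0 \<in> Xs i"
    and add_mem: "i \<in> {1..r} \<Longrightarrow> a \<in> Xs i \<Longrightarrow> b \<in> Xs i \<Longrightarrow> a + b \<in> Xs i"
begin

lemma proj_eqI: "is_components r Xs x c \<Longrightarrow> proj r Xs i x = c i"
  unfolding proj_def using unique_components by (metis the1_equality)

lemma is_components_proj: "is_components r Xs x (\<lambda>i. proj r Xs i x)"
  unfolding proj_def using unique_components by (metis theI')

lemma proj_mem: "i \<in> {1..r} \<Longrightarrow> proj r Xs i x \<in> Xs i"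
  using is_components_proj unfolding is_components_def by blast

lemma sum_proj: "(\<Sum>i\<in>{1..r}. proj r Xs i x) = x"
  using is_components_proj unfolding is_components_def by metis

lemma proj_sum:
  assumes "\<forall>j\<in>{1..r}. y j \<in> Xs j" and "i \<in> {1..r}"
  shows "proj r Xs i (\<Sum>j\<in>{1..r}. y j) = y i"
proof -
  have "is_components r Xs (\<Sum>j\<in>{1..r}. y j) (\<lambda>j. if j \<in> {1..r} then y j else 0)"
    unfolding is_components_def using assms(1) by simp
  then show ?thesis using assms(2) by (simp add: proj_eqI)
qed

lemma proj_of_mem:
  assumes "i \<in> {1..r}" and "y \<in> Xs i"
  shows "proj r Xs i y = y"
  using proj_sum[of "\<lambda>j. if j = i then y else 0" i] assms zero_mem by (simp add: sum.delta)

lemma in_Gs_sum: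
  assumes "in_Gs r Xs h" and "\<forall>j\<in>{1..r}. y j \<in> Xs j"
  shows "h (\<Sum>j\<in>{1..r}. y j) = (\<Sum>j\<in>{1..r}. h (y j))"
proof -
  have "h (\<Sum>j\<in>{1..r}. y j) = (\<Sum>i\<in>{1..r}. h (proj r Xs i (\<Sum>j\<in>{1..r}. y j)))"
    using assms(1) unfolding in_Gs_def by blast
  also have "\<dots> = (\<Sum>i\<in>{1..r}. h (y i))"
    using proj_sum[OF assms(2)] by (intro sum.cong) auto
  finally show ?thesis .
qed

lemma in_Gs_add:
  assumes h: "in_Gs r Xs h" and k: "in_Gs r Xs k"
  shows "in_Gs r Xs (\<lambda>x. h x + k x)"
  unfolding in_Gs_def
proof (intro conjI allI)
  fix x
  show "0 \<le> h x + k x" using in_Gs_nonneg[OF h] in_Gs_nonneg[OF k] by (rule add_nonneg_nonneg)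
  have "h x = (\<Sum>i\<in>{1..r}. h (proj r Xs i x))" and "k x = (\<Sum>i\<in>{1..r}. k (proj r Xs i x))"
    using h k unfolding in_Gs_def by blast+
  then show "h x + k x = (\<Sum>i\<in>{1..r}. h (proj r Xs i x) + k (proj r Xs i x))"
    by (simp only: sum.distrib)
qed

context
  fixes A :: "'x \<Rightarrow> 'x" and B :: "'u::ab_group_add \<Rightarrow> 'x" and J :: "'x \<Rightarrow> real"
  assumes additive_A: "additive A" and additive_B: "additive B"
    and invariant: "\<forall>j\<in>{1..r}. A ` Xs j \<subseteq> Xs j"
    and separable: "in_Gs r Xs J"
begin

lemma cost_split:
  assumes "\<forall>j\<in>{1..r}. B (e j) \<in> Xs j"
  shows "J (A x + B (\<Sum>j\<in>{1..r}. e j)) = (\<Sum>j\<in>{1..r}. J (A (proj r Xs j x) + B (e j)))"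
proof -
  have "A x = A (\<Sum>j\<in>{1..r}. proj r Xs j x)" by (simp only: sum_proj)
  then have "A x + B (\<Sum>j\<in>{1..r}. e j) = (\<Sum>j\<in>{1..r}. A (proj r Xs j x) + B (e j))"
    by (simp only: additive.sum[OF additive_A] additive.sum[OF additive_B] sum.distrib)
  moreover have "\<forall>j\<in>{1..r}. A (proj r Xs j x) + B (e j) \<in> Xs j"
    using assms invariant proj_mem add_mem by blast
  ultimately show ?thesis using in_Gs_sum[OF separable] by simp
qed

lemma optimal_control_in_summand:
  assumes opt: "\<exists>u\<in>Esum r B Xs. \<forall>v. J (A y + B u) \<le> J (A y + B v)"
    and i: "i \<in> {1..r}" and y: "y \<in> Xs i"
  shows "\<exists>w. B w \<in> Xs i \<and> J (A y + B w) \<le> bellman_min J A B y"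
proof -
  obtain e where e: "\<forall>j\<in>{1..r}. B (e j) \<in> Xs j"
    and e_opt: "\<forall>v. J (A y + B (\<Sum>j\<in>{1..r}. e j)) \<le> J (A y + B v)"
    using opt unfolding Esum_def Eset_def by auto
  have "J (A y + B (e i)) = J (A (proj r Xs i y) + B (e i))"
    using i y by (simp add: proj_of_mem)
  also have "\<dots> \<le> (\<Sum>j\<in>{1..r}. J (A (proj r Xs j y) + B (e j)))"
    using i in_Gs_nonneg[OF separable] by (intro member_le_sum) auto
  also have "\<dots> = bellman_min J A B y"
    using cost_split[OF e] bellman_min_eq_minimum[where J = J and A = A and B = B, OF e_opt] by simp
  finally show ?thesis using e i by blast
qed

lemma in_Gs_bellman_min:
  assumes opt: "\<forall>x. \<exists>u\<in>Esum r B Xs. \<forall>v. J (A x + B u) \<le> J (A x + B v)"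
  shows "in_Gs r Xs (bellman_min J A B)"
proof -
  have J_nonneg: "\<forall>y. 0 \<le> J y" using in_Gs_nonneg[OF separable] by blast
  have "bellman_min J A B x = (\<Sum>i\<in>{1..r}. bellman_min J A B (proj r Xs i x))" for x
  proof (rule antisym)
    obtain e where e: "\<forall>j\<in>{1..r}. B (e j) \<in> Xs j"
      and e_opt: "\<forall>v. J (A x + B (\<Sum>j\<in>{1..r}. e j)) \<le> J (A x + B v)"
      using opt unfolding Esum_def Eset_def by blast
    have "(\<Sum>i\<in>{1..r}. bellman_min J A B (proj r Xs i x))
        \<le> (\<Sum>i\<in>{1..r}. J (A (proj r Xs i x) + B (e i)))"
      using J_nonneg by (intro sum_mono bellman_min_le)
    also have "\<dots> = bellman_min J A B x"
      using cost_split[OF e] bellman_min_eq_minimum[where J = J and A = A and B = B, OF e_opt] by simp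
    finally show "(\<Sum>i\<in>{1..r}. bellman_min J A B (proj r Xs i x)) \<le> bellman_min J A B x" .
  next
    have "\<forall>i\<in>{1..r}. \<exists>w. B w \<in> Xs i \<and>
        J (A (proj r Xs i x) + B w) \<le> bellman_min J A B (proj r Xs i x)"
      using optimal_control_in_summand opt proj_mem by blast
    then obtain w where w: "\<forall>i\<in>{1..r}. B (w i) \<in> Xs i \<and>
        J (A (proj r Xs i x) + B (w i)) \<le> bellman_min J A B (proj r Xs i x)"
      by (metis bchoice)
    have "bellman_min J A B x \<le> J (A x + B (\<Sum>i\<in>{1..r}. w i))"
      using J_nonneg by (rule bellman_min_le)
    also have "\<dots> = (\<Sum>i\<in>{1..r}. J (A (proj r Xs i x) + B (w i)))"
      using w by (intro cost_split) blast
    also have "\<dots> \<le> (\<Sum>i\<in>{1..r}. bellman_min J A B (proj r Xs i x))"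
      using w by (intro sum_mono) blast
    finally show "bellman_min J A B x \<le> (\<Sum>i\<in>{1..r}. bellman_min J A B (proj r Xs i x))" .
  qed
  then show ?thesis unfolding in_Gs_def using J_nonneg bellman_min_nonneg by blast
qed

end

end

lemma decomposition_imp_direct_sum:
  assumes "module sX" and "is_decomposition sX A r Xs"
  shows "direct_sum_decomposition r Xs"
  using assms module.subspace_0 module.subspace_add
  unfolding is_decomposition_def direct_sum_decomposition_def by metis

lemma ctg_minimiser_in_Esum:
  assumes "\<forall>x. \<forall>t<T. argmin_set g A B T t x \<inter> Esum r B Xs \<noteq> {}" and "Suc k \<le> T"
  shows "\<forall>x. \<exists>u\<in>Esum r B Xs. \<forall>v. ctg g A B k (A x + B u) \<le> ctg g A B k (A x + B v)"
proof
  fix x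
  have "T - Suc k < T" using assms(2) by simp
  then obtain u where "u \<in> argmin_set g A B T (T - Suc k) x" and "u \<in> Esum r B Xs"
    using assms(1) by blast
  moreover have "Jstar g A B T (Suc (T - Suc k)) = ctg g A B k"
    unfolding Jstar_def using assms(2) by (simp add: Suc_diff_Suc)
  ultimately show "\<exists>u\<in>Esum r B Xs. \<forall>v. ctg g A B k (A x + B u) \<le> ctg g A B k (A x + B v)"
    unfolding argmin_set_def by auto
qed

theorem proposition2:
  fixes sX :: "'f::field \<Rightarrow> 'x::ab_group_add \<Rightarrow> 'x"
    and sU :: "'f \<Rightarrow> 'u::ab_group_add \<Rightarrow> 'u"
    and BasX :: "'x set" and BasU :: "'u set"
    and A :: "'x \<Rightarrow> 'x" and B :: "'u \<Rightarrow> 'x"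
    and g :: "'x \<Rightarrow> real" and r T :: nat and Xs :: "nat \<Rightarrow> 'x set"
  assumes "finite_dimensional_vector_space sX BasX"
    and "finite_dimensional_vector_space sU BasU"
    and "Vector_Spaces.linear sX sX A" and "Vector_Spaces.linear sU sX B" and "inj B"
    and "\<forall>x. g x \<ge> 0" and "\<forall>x. g x = 0 \<longleftrightarrow> x = 0"
    and "\<forall>t<T. \<forall>x. \<exists>u. \<forall>v. Jstar g A B T (Suc t) (A x + B u) \<le> Jstar g A B T (Suc t) (A x + B v)"
    and "is_decomposition sX A r Xs"
    and "in_Gs r Xs g"
    and "T > 0"
    and "\<forall>x. \<forall>t<T. argmin_set g A B T t x \<inter> Esum r B Xs \<noteq> {}"
  shows "\<forall>t\<le>T. in_Gs r Xs (Jstar g A B T t)"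
proof -
  have "module sX" using assms(1)
    by (simp add: finite_dimensional_vector_space_def module_iff_vector_space)
  then interpret direct_sum_decomposition r Xs
    using assms(9) by (rule decomposition_imp_direct_sum)
  have invariant: "\<forall>i\<in>{1..r}. A ` Xs i \<subseteq> Xs i"
    using assms(9) unfolding is_decomposition_def by blast
  have "in_Gs r Xs (ctg g A B k)" if "k \<le> T" for k
    using that
  proof (induction k)
    case 0
    then show ?case using assms(10) by simp
  next
    case (Suc k)
    have "\<forall>x. \<exists>u\<in>Esum r B Xs. \<forall>v. ctg g A B k (A x + B u) \<le> ctg g A B k (A x + B v)"
      using assms(12) Suc.prems by (rule ctg_minimiser_in_Esum)
    moreover have "in_Gs r Xs (ctg g A B k)" using Suc by simp
    ultimately have "in_Gs r Xs (bellman_min (ctg g A B k) A B)"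
      using assms(3,4) invariant by (intro in_Gs_bellman_min linear_imp_additive)
    then show ?case unfolding ctg_Suc_bellman_min by (rule in_Gs_add[OF assms(10)])
  qed
  then show ?thesis unfolding Jstar_def by simp
qed

end
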